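(* Let $(\Sigma_P,\theta,\mu)$ be a Markov shift over a finite alphabet $S$, let $n\in\mathbb{N}$ and let $\varphi=\sum_{C\in C_n}k_C\mathbbm{1}_C$ with $k_C\in\mathbb{N}$. Let $\overline{M}$, $G$ and the cofactors $C_{t,r}$ be as defined in the context. Let $(a_1,\dots,a_m)$ be an admissible word with $m\ge n$, let $t$ be the index of the block $[a_1,\dots,a_n]\times[0,1)$ and $r$ the index of the block $[a_{m-n+1},\dots,a_m]\times[0,1)$. Then \[C_{t,r}(1)=\frac{1}{\mu(\varphi)}\,\mu([a_1,\dots,a_n])\,G(1).\]
   Context: A Markov shift: $P=(p_{a,b})_{a,b\in S}$ is a non-negative irreducible row-stochastic matrix, $\Sigma_P=\{x\in S^{\mathbb{N}}:p_{x_i,x_{i+1}}>0\ \forall i\}$, $\theta$ the shift, $\pi$ the unique positive probability vector with $\pi P=\pi$, and $\mu([a_1,\dots,a_n])=\pi_{a_1}\prod_{i=1}^{n-1}p_{a_i,a_{i+1}}$. $C_n$ is the set of (nonempty) $n$-cylinders; $\mu(\varphi)=\int\varphi\,d\mu$. The blocks are $\overline{C}_n=\{C\times[k-1,k):C\in C_n,1\le k\le k_C\}$, enumerated in a fixed order. $\overline{M}$ is the $\overline{C}_n\times\overline{C}_n$ matrix with: for $b=C\times[k-1,k)$ with $k<k_C$, $\overline{M}_{b,b'}=1$ if $b'=C\times[k,k+1)$ and $0$ otherwise; for $b=[a_1,\dots,a_n]\times[k_C-1,k_C)$ with $C=[a_1,\dots,a_n]$, $\overline{M}_{b,b'}=p_{a_n,a}$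 if $b'=[a_2,\dots,a_n,a]\times[0,1)$ for some $a\in S$ and $0$ otherwise. (This is the matrix of the transfer operator of the time-one map of the special flow under $\varphi$ on functions constant on blocks, w.r.t. the basis $\mathbbm{1}_b/\overline{\mu}(b)$.) $G$ is the polynomial with $\det(\mathrm{id}-z\overline{M})=(1-z)G(z)$, and $C_{t,r}(z)=(-1)^{t+r}\det[\mathrm{id}-z\overline{M}]_{t,r}$ is the cofactor (determinant of $\mathrm{id}-z\overline{M}$ with row $t$ and column $r$ removed). *)

theory Defs
  imports "Jordan_Normal_Form.Determinant" "HOL-Computational_Algebra.Polynomial"
begin

definition row_stochastic :: "('a::finite \<Rightarrow> 'a \<Rightarrow> real) \<Rightarrow> bool" where
  "row_stochastic P \<longleftrightarrow> (\<forall>a b. P a b \<ge> 0) \<and> (\<forall>a. (\<Sum>b\<in>UNIV. P a b) = 1)"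

definition irreducible_mc :: "('a \<Rightarrow> 'a \<Rightarrow> real) \<Rightarrow> bool" where
  "irreducible_mc P \<longleftrightarrow> (\<forall>a b. (a, b) \<in> {(x, y). P x y > 0}\<^sup>+)"

definition stationary_pos :: "('a::finite \<Rightarrow> 'a \<Rightarrow> real) \<Rightarrow> ('a \<Rightarrow> real) \<Rightarrow> bool" where
  "stationary_pos P \<pi> \<longleftrightarrow> (\<forall>a. \<pi> a > 0) \<and> (\<Sum>a\<in>UNIV. \<pi> a) = 1 \<and>
     (\<forall>b. (\<Sum>a\<in>UNIV. \<pi> a * P a b) = \<pi> b)"

definition admissible :: "('a \<Rightarrow> 'a \<Rightarrow> real) \<Rightarrow> 'a list \<Rightarrow> bool" where
  "admissible P w \<longleftrightarrow> successively (\<lambda>x y. P x y > 0) w"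

(* n-cylinders (nonempty), represented by their admissible words of length n *)
definition cyls :: "('a \<Rightarrow> 'a \<Rightarrow> real) \<Rightarrow> nat \<Rightarrow> 'a list set" where
  "cyls P n = {w. length w = n \<and> admissible P w}"

definition mu_cyl :: "('a \<Rightarrow> 'a \<Rightarrow> real) \<Rightarrow> ('a \<Rightarrow> real) \<Rightarrow> 'a list \<Rightarrow> real" where
  "mu_cyl P \<pi> w = \<pi> (hd w) * (\<Prod>i<length w - 1. P (w ! i) (w ! Suc i))"

(* mu(phi) for phi = sum_C k_C 1_C *)
definition mu_phi :: "('a \<Rightarrow> 'a \<Rightarrow> real) \<Rightarrow> ('a \<Rightarrow> real) \<Rightarrow> nat \<Rightarrow> ('a list \<Rightarrow> nat) \<Rightarrow> real" where
  "mu_phi P \<pi> n k = (\<Sum>C\<in>cyls P n. real (k C) * mu_cyl P \<pi> C)"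

(* blocks C \<times> [j-1, j) are represented by pairs (C, j) with 1 \<le> j \<le> k_C *)
definition blocks :: "('a \<Rightarrow> 'a \<Rightarrow> real) \<Rightarrow> nat \<Rightarrow> ('a list \<Rightarrow> nat) \<Rightarrow> ('a list \<times> nat) set" where
  "blocks P n k = {(C, j). C \<in> cyls P n \<and> 1 \<le> j \<and> j \<le> k C}"

definition Mbar_entry :: "('a \<Rightarrow> 'a \<Rightarrow> real) \<Rightarrow> ('a list \<Rightarrow> nat) \<Rightarrow> 'a list \<times> nat \<Rightarrow> 'a list \<times> nat \<Rightarrow> real" where
  "Mbar_entry P k b b' =
     (let (C, j) = b; (C', j') = b' in
      if j < k C then (if C' = C \<and> j' = Suc j then 1 else 0)
      else (if j' = 1 \<and> butlast C' = tl C then P (last C) (last C') else 0))"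

definition Mbar :: "('a \<Rightarrow> 'a \<Rightarrow> real) \<Rightarrow> ('a list \<Rightarrow> nat) \<Rightarrow> ('a list \<times> nat) list \<Rightarrow> real mat" where
  "Mbar P k bl = mat (length bl) (length bl) (\<lambda>(i, j). Mbar_entry P k (bl ! i) (bl ! j))"

(* position of a block in the enumeration (0-based) *)
definition blk_index :: "'b list \<Rightarrow> 'b \<Rightarrow> nat" where
  "blk_index bl b = (LEAST i. i < length bl \<and> bl ! i = b)"

definition IzM :: "real mat \<Rightarrow> real poly mat" where
  "IzM M = mat (dim_row M) (dim_col M)
     (\<lambda>(i, j). (if i = j then 1 else 0) - [:0, M $$ (i, j):])"

definition Gpoly :: "real mat \<Rightarrow> real poly" where
  "Gpoly M = det (IzM M) div [:1, -1:]"

definition cofactor_poly :: "real mat \<Rightarrow> nat \<Rightarrow> nat \<Rightarrow> real poly" where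
  "cofactor_poly M t r = (-1) ^ (t + r) * det (mat_delete (IzM M) t r)"

end

theory Submission
  imports Defs
begin

text \<open>The rows of \<open>id - z M\<close> all sum to \<open>1 - z\<close> because \<open>M\<close> is stochastic, so adding all
  columns to column \<open>r\<close> and expanding along it gives \<open>det (id - z M) = (1 - z) \<Sum>\<^sub>i C\<^sub>i\<^sub>,\<^sub>r(z)\<close>,
  i.e. \<open>G = \<Sum>\<^sub>i C\<^sub>i\<^sub>,\<^sub>r\<close>. The lift \<open>\<nu>(C \<times> [j-1,j)) = \<mu>(C)\<close> of the Markov measure is a left
  fixed vector of \<open>M\<close> (this is stationarity of \<open>\<pi>\<close>), hence a left null vector of \<open>id - M\<close>, and a
  column of cofactors is proportional to every left null vector: \<open>\<nu>\<^sub>t C\<^sub>i\<^sub>,\<^sub>r(1) = \<nu>\<^sub>i C\<^sub>t\<^sub>,\<^sub>r(1)\<close>.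
  Summing over \<open>i\<close>, with \<open>\<Sum>\<^sub>i \<nu>\<^sub>i = \<mu>(\<phi>)\<close>, gives the theorem.\<close>

lemma det_eq_row_sum_mult_sum_cofactor:
  fixes B :: "'a::comm_ring_1 mat"
  assumes B: "B \<in> carrier_mat n n" and r: "r < n"
    and row_sum: "\<And>i. i < n \<Longrightarrow> (\<Sum>j<n. B $$ (i,j)) = c"
  shows "det B = c * (\<Sum>i<n. cofactor B i r)"
proof -
  have adj: "adj_mat B * B = det B \<cdot>\<^sub>m 1\<^sub>m n" using adj_mat[OF B] by simp
  have "det B = (\<Sum>j<n. (adj_mat B * B) $$ (r,j))"
    unfolding adj using r by (simp add: sum.delta' if_distrib cong: if_cong)
  also have "\<dots> = (\<Sum>j<n. \<Sum>i<n. cofactor B i r * B $$ (i,j))"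
    using B r by (auto simp: times_mat_def scalar_prod_def adj_mat_def intro!: sum.cong)
  also have "\<dots> = (\<Sum>i<n. cofactor B i r * (\<Sum>j<n. B $$ (i,j)))"
    by (subst sum.swap) (simp add: sum_distrib_left)
  also have "\<dots> = (\<Sum>i<n. cofactor B i r * c)" using row_sum by simp
  finally show ?thesis by (simp add: sum_distrib_left mult.commute)
qed

lemma det_replace_col_eq_sum_cofactor:
  fixes A :: "'a::comm_ring_1 mat"
  assumes A: "A \<in> carrier_mat n n" and r: "r < n"
  shows "det (replace_col A (vec n y) r) = (\<Sum>i<n. y i * cofactor A i r)"
proof -
  have "replace_col A (vec n y) r \<in> carrier_mat n n" using A by (auto simp: replace_col_def)
  from laplace_expansion_column[OF this r] show ?thesis
    using A r by (auto intro!: sum.cong arg_cong[of _ _ det] arg_cong[of _ _ "\<lambda>x. _ * x"] eq_matI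
        simp: replace_col_def cofactor_def mat_delete_def ac_simps)
qed

lemma det_replace_col_left_null:
  fixes A :: "'a::field mat"
  assumes A: "A \<in> carrier_mat n n" and r: "r < n"
    and null: "\<And>j. j < n \<Longrightarrow> (\<Sum>i<n. \<nu> i * A $$ (i,j)) = 0"
    and nonzero: "i0 < n" "\<nu> i0 \<noteq> 0"
    and orth: "(\<Sum>i<n. \<nu> i * y i) = 0"
  shows "det (replace_col A (vec n y) r) = 0"
proof -
  let ?D = "replace_col A (vec n y) r"
  have D: "?D \<in> carrier_mat n n" using A by (auto simp: replace_col_def)
  have "transpose_mat ?D *\<^sub>v vec n \<nu> = 0\<^sub>v n"
  proof (rule eq_vecI)
    fix j assume "j < dim_vec (0\<^sub>v n :: 'a vec)"
    hence j: "j < n" by simp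
    have "(transpose_mat ?D *\<^sub>v vec n \<nu>) $ j = (\<Sum>i<n. \<nu> i * ?D $$ (i,j))"
      using D j by (auto simp: mult_mat_vec_def scalar_prod_def atLeast0LessThan mult.commute
          intro!: sum.cong)
    also have "\<dots> = 0"
      using null[OF j] orth A j by (cases "j = r") (auto simp: replace_col_def)
    finally show "(transpose_mat ?D *\<^sub>v vec n \<nu>) $ j = 0\<^sub>v n $ j" using j by simp
  qed (use D in auto)
  moreover have "vec n \<nu> \<noteq> 0\<^sub>v n" using nonzero by (metis index_vec index_zero_vec(1))
  ultimately have "det (transpose_mat ?D) = 0"
    using det_0_iff_vec_prod_zero_field[of "transpose_mat ?D" n] D by (metis transpose_carrier_mat vec_carrier)
  thus ?thesis using det_transpose[OF D] by simp
qed

text \<open>Replacing column \<open>r\<close> by a vector orthogonal to \<open>\<nu>\<close> keeps \<open>\<nu>\<close> in the left kernel, so the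
  determinant, which is the pairing of that vector with the \<open>r\<close>-th cofactor column, vanishes.
  No assumption on the rank of \<open>A\<close> is needed.\<close>

lemma cofactor_col_proportional_left_null:
  fixes A :: "'a::field mat"
  assumes A: "A \<in> carrier_mat n n" and r: "r < n" and i: "i < n" and t: "t < n"
    and null: "\<And>j. j < n \<Longrightarrow> (\<Sum>l<n. \<nu> l * A $$ (l,j)) = 0"
  shows "\<nu> t * cofactor A i r = \<nu> i * cofactor A t r"
proof (cases "\<exists>i0<n. \<nu> i0 \<noteq> 0")
  case False
  thus ?thesis using i t by auto
next
  case True
  then obtain i0 where i0: "i0 < n" "\<nu> i0 \<noteq> 0" by blast
  define y where "y l = (if l = i then \<nu> t else 0) - (if l = t then \<nu> i else 0)" for l
  have "(\<Sum>l<n. \<nu> l * y l)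
      = (\<Sum>l<n. if l = i then \<nu> l * \<nu> t else 0) - (\<Sum>l<n. if l = t then \<nu> l * \<nu> i else 0)"
    unfolding y_def by (subst sum_subtractf[symmetric]) (rule sum.cong; simp)
  hence "(\<Sum>l<n. \<nu> l * y l) = 0" using i t by (simp add: mult.commute)
  hence "det (replace_col A (vec n y) r) = 0"
    using det_replace_col_left_null[OF A r null i0] by blast
  moreover have "(\<Sum>l<n. y l * cofactor A l r)
      = (\<Sum>l<n. if l = i then \<nu> t * cofactor A l r else 0)
        - (\<Sum>l<n. if l = t then \<nu> i * cofactor A l r else 0)"
    unfolding y_def by (subst sum_subtractf[symmetric]) (rule sum.cong; simp)
  ultimately show ?thesis
    using i t by (simp add: det_replace_col_eq_sum_cofactor[OF A r])
qed

lemma (in comm_ring_hom) hom_cofactor: "hom (cofactor A i j) = cofactor (map_mat hom A) i j"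
proof -
  have "map_mat hom (mat_delete A i j) = mat_delete (map_mat hom A) i j"
    by (rule eq_matI) (auto simp: mat_delete_def)
  thus ?thesis by (metis cofactor_def hom_det hom_mult hom_power hom_one hom_uminus)
qed

lemma sum_pCons_zero: "(\<Sum>j\<in>S. [:0, f j:]) = [:0, \<Sum>j\<in>S. f j:]"
  by (induction S rule: infinite_finite_induct) auto

lemma IzM_carrier: "M \<in> carrier_mat n n \<Longrightarrow> IzM M \<in> carrier_mat n n"
  by (simp add: IzM_def)

lemma IzM_at_1: "M \<in> carrier_mat n n \<Longrightarrow> map_mat (\<lambda>p. poly p 1) (IzM M) = 1\<^sub>m n - M"
  by (intro eq_matI) (auto simp: IzM_def)

lemma row_sum_IzM:
  assumes M: "M \<in> carrier_mat n n" and i: "i < n" and row_sum: "(\<Sum>j<n. M $$ (i,j)) = 1"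
  shows "(\<Sum>j<n. IzM M $$ (i,j)) = [:1, -1:]"
proof -
  have "(\<Sum>j<n. IzM M $$ (i,j)) = (\<Sum>j<n. if i = j then 1 else 0) - (\<Sum>j<n. [:0, M $$ (i,j):])"
    using M i by (subst sum_subtractf[symmetric]) (rule sum.cong; simp add: IzM_def)
  also have "\<dots> = 1 - [:0, 1:]" using i row_sum by (simp add: sum_pCons_zero)
  also have "(1::real poly) - [:0, 1:] = [:1, -1:]"
    by (simp add: one_pCons)
  finally show ?thesis .
qed

lemma cofactor_poly_eq_cofactor: "cofactor_poly M t r = cofactor (IzM M) t r"
  by (simp add: cofactor_poly_def cofactor_def)

lemma Gpoly_eq_sum_cofactor:
  assumes M: "M \<in> carrier_mat n n" and r: "r < n"
    and row_sum: "\<And>i. i < n \<Longrightarrow> (\<Sum>j<n. M $$ (i,j)) = 1"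
  shows "Gpoly M = (\<Sum>i<n. cofactor (IzM M) i r)"
proof -
  have "det (IzM M) = [:1, -1:] * (\<Sum>i<n. cofactor (IzM M) i r)"
    using IzM_carrier[OF M] r row_sum_IzM[OF M _ row_sum] by (rule det_eq_row_sum_mult_sum_cofactor)
  thus ?thesis unfolding Gpoly_def by (simp only:) (rule nonzero_mult_div_cancel_left; simp)
qed

lemma stochastic_cofactor_poly_at_1:
  assumes M: "M \<in> carrier_mat n n" and t: "t < n" and r: "r < n"
    and row_sum: "\<And>i. i < n \<Longrightarrow> (\<Sum>j<n. M $$ (i,j)) = 1"
    and fixed: "\<And>j. j < n \<Longrightarrow> (\<Sum>i<n. \<nu> i * M $$ (i,j)) = \<nu> j"
  shows "\<nu> t * poly (Gpoly M) 1 = (\<Sum>i<n. \<nu> i) * poly (cofactor_poly M t r) 1"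
proof -
  interpret eval_1: comm_ring_hom "\<lambda>p::real poly. poly p 1" by unfold_locales auto
  define A where "A = 1\<^sub>m n - M"
  have A: "A \<in> carrier_mat n n" using M by (simp add: A_def minus_carrier_mat)
  have null: "(\<Sum>i<n. \<nu> i * A $$ (i,j)) = 0" if j: "j < n" for j
  proof -
    have "(\<Sum>i<n. \<nu> i * A $$ (i,j)) = (\<Sum>i<n. if i = j then \<nu> i else 0) - (\<Sum>i<n. \<nu> i * M $$ (i,j))"
      using M j by (subst sum_subtractf[symmetric]) (rule sum.cong; simp add: A_def right_diff_distrib)
    thus ?thesis using fixed[OF j] j by simp
  qed
  have eval_cofactor: "poly (cofactor (IzM M) i r) 1 = cofactor A i r" for i
    unfolding eval_1.hom_cofactor IzM_at_1[OF M] A_def ..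
  have "\<nu> t * poly (Gpoly M) 1 = (\<Sum>i<n. \<nu> t * cofactor A i r)"
    by (simp add: Gpoly_eq_sum_cofactor[OF M r row_sum] poly_sum eval_cofactor sum_distrib_left)
  also have "\<dots> = (\<Sum>i<n. \<nu> i * cofactor A t r)"
    using cofactor_col_proportional_left_null[OF A r _ t null] by simp
  also have "\<dots> = (\<Sum>i<n. \<nu> i) * poly (cofactor_poly M t r) 1"
    by (simp add: sum_distrib_right cofactor_poly_eq_cofactor eval_cofactor)
  finally show ?thesis .
qed

definition path_weight :: "('a \<Rightarrow> 'a \<Rightarrow> real) \<Rightarrow> 'a list \<Rightarrow> real" where
  "path_weight P w = (\<Prod>i<length w - 1. P (w ! i) (w ! Suc i))"

lemma mu_cyl_eq_path_weight: "mu_cyl P \<pi> w = \<pi> (hd w) * path_weight P w"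
  by (simp add: mu_cyl_def path_weight_def)

lemma path_weight_Nil [simp]: "path_weight P [] = 1"
  by (simp add: path_weight_def)

lemma path_weight_singleton [simp]: "path_weight P [x] = 1"
  by (simp add: path_weight_def)

lemma path_weight_Cons_Cons [simp]: "path_weight P (x # y # ys) = P x y * path_weight P (y # ys)"
  unfolding path_weight_def by (simp add: prod.lessThan_Suc_shift del: prod.lessThan_Suc)

lemma path_weight_snoc: "path_weight P (x # ys @ [c]) = path_weight P (x # ys) * P (last (x # ys)) c"
  by (induction ys arbitrary: x) simp_all

lemma path_weight_nonneg: "\<forall>a b. P a b \<ge> 0 \<Longrightarrow> path_weight P w \<ge> 0"
  unfolding path_weight_def by (auto intro: prod_nonneg)

lemma path_weight_pos: "admissible P w \<Longrightarrow> path_weight P w > 0"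
  by (induction w rule: induct_list012) (simp_all add: admissible_def)

lemma admissible_append_iff:
  "admissible P (u @ v) \<longleftrightarrow> admissible P u \<and> admissible P v \<and>
     (u \<noteq> [] \<and> v \<noteq> [] \<longrightarrow> P (last u) (hd v) > 0)"
  by (auto simp: admissible_def successively_append_iff)

lemma admissible_take: "admissible P w \<Longrightarrow> admissible P (take m w)"
  by (metis admissible_append_iff append_take_drop_id)

lemma admissible_drop: "admissible P w \<Longrightarrow> admissible P (drop m w)"
  by (metis admissible_append_iff append_take_drop_id)

lemma finite_cyls: "finite (cyls (P :: 'a::finite \<Rightarrow> 'a \<Rightarrow> real) n)"
  by (rule finite_subset[OF _ finite_lists_length_eq[of UNIV n]]) (auto simp: cyls_def)

lemma cyls_with_butlast:
  assumes "n \<ge> 1" "length L = n - 1"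
  shows "{C \<in> cyls P n. butlast C = L} = (\<lambda>a. L @ [a]) ` {a. admissible P (L @ [a])}"
proof (intro equalityI subsetI)
  fix C assume "C \<in> {C \<in> cyls P n. butlast C = L}"
  hence C: "length C = n" "admissible P C" "butlast C = L" by (auto simp: cyls_def)
  hence "C = L @ [last C]" using assms by (metis append_butlast_last_id le_zero_eq list.size(3) not_one_le_zero)
  thus "C \<in> (\<lambda>a. L @ [a]) ` {a. admissible P (L @ [a])}" using C by (metis (mono_tags) image_eqI mem_Collect_eq)
qed (use assms in \<open>auto simp: cyls_def\<close>)

lemma cyls_with_tl:
  assumes "n \<ge> 1" "length L = n - 1"
  shows "{C \<in> cyls P n. tl C = L} = (\<lambda>a. a # L) ` {a. admissible P (a # L)}"
proof (intro equalityI subsetI)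
  fix C assume "C \<in> {C \<in> cyls P n. tl C = L}"
  hence C: "length C = n" "admissible P C" "tl C = L" by (auto simp: cyls_def)
  hence "C = hd C # L" using assms by (metis list.collapse list.size(3) not_one_le_zero)
  thus "C \<in> (\<lambda>a. a # L) ` {a. admissible P (a # L)}" using C by (metis (mono_tags) image_eqI mem_Collect_eq)
qed (use assms in \<open>auto simp: cyls_def\<close>)

lemma sum_cyls_extend_right:
  fixes P :: "'a::finite \<Rightarrow> 'a \<Rightarrow> real"
  assumes nonneg: "\<forall>a b. P a b \<ge> 0" and C: "C \<in> cyls P n" and n: "n \<ge> 1"
  shows "(\<Sum>C'\<in>{C' \<in> cyls P n. butlast C' = tl C}. P (last C) (last C')) = (\<Sum>a\<in>UNIV. P (last C) a)"
proof -
  have len: "length (tl C) = n - 1" and "C \<noteq> []" and adm: "admissible P (tl C)"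
    using C n admissible_drop[of P C 1] by (auto simp: cyls_def drop_Suc)
  have "(\<Sum>C'\<in>{C' \<in> cyls P n. butlast C' = tl C}. P (last C) (last C'))
      = (\<Sum>a\<in>{a. admissible P (tl C @ [a])}. P (last C) a)"
    unfolding cyls_with_butlast[OF n len] by (subst sum.reindex) (auto simp: inj_on_def)
  also have "\<dots> = (\<Sum>a\<in>UNIV. P (last C) a)"
  proof (rule sum.mono_neutral_left)
    show "\<forall>a\<in>UNIV - {a. admissible P (tl C @ [a])}. P (last C) a = 0"
    proof
      fix a assume a: "a \<in> UNIV - {a. admissible P (tl C @ [a])}"
      hence "tl C \<noteq> []" by (auto simp: admissible_def)
      moreover from this have "last (tl C) = last C" using \<open>C \<noteq> []\<close> by (metis last_tl)
      ultimately have "\<not> P (last C) a > 0"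
        using a adm admissible_append_iff[of P "tl C" "[a]"] by (simp add: admissible_def)
      thus "P (last C) a = 0" using nonneg[rule_format, of "last C" a] by linarith
    qed
  qed auto
  finally show ?thesis .
qed

lemma sum_cyls_extend_left:
  fixes P :: "'a::finite \<Rightarrow> 'a \<Rightarrow> real"
  assumes nonneg: "\<forall>a b. P a b \<ge> 0" and stationary: "\<forall>b. (\<Sum>a\<in>UNIV. \<pi> a * P a b) = \<pi> b"
    and C': "C' \<in> cyls P n" and n: "n \<ge> 1"
  shows "(\<Sum>C\<in>{C \<in> cyls P n. tl C = butlast C'}. mu_cyl P \<pi> C * P (last C) (last C')) = mu_cyl P \<pi> C'"
proof -
  have len: "length (butlast C') = n - 1" and "C' \<noteq> []" and adm: "admissible P (butlast C')"
    using C' n admissible_take[of P C' "n - 1"] by (auto simp: cyls_def butlast_conv_take)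
  have extend: "mu_cyl P \<pi> (a # butlast C') * P (last (a # butlast C')) (last C')
      = \<pi> a * P a (hd C') * path_weight P C'" for a
  proof -
    have "mu_cyl P \<pi> (a # butlast C') * P (last (a # butlast C')) (last C')
        = \<pi> a * path_weight P (a # C')"
      using path_weight_snoc[of P a "butlast C'" "last C'"] \<open>C' \<noteq> []\<close>
      by (simp add: mu_cyl_eq_path_weight)
    also have "\<dots> = \<pi> a * P a (hd C') * path_weight P C'"
      using \<open>C' \<noteq> []\<close> by (cases C') simp_all
    finally show ?thesis .
  qed
  have "(\<Sum>C\<in>{C \<in> cyls P n. tl C = butlast C'}. mu_cyl P \<pi> C * P (last C) (last C'))
      = (\<Sum>a\<in>{a. admissible P (a # butlast C')}.
           mu_cyl P \<pi> (a # butlast C') * P (last (a # butlast C')) (last C'))"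
    unfolding cyls_with_tl[OF n len] by (subst sum.reindex) (auto simp: inj_on_def)
  also have "\<dots> = (\<Sum>a\<in>{a. admissible P (a # butlast C')}. \<pi> a * P a (hd C') * path_weight P C')"
    by (simp only: extend)
  also have "\<dots> = (\<Sum>a\<in>UNIV. \<pi> a * P a (hd C') * path_weight P C')"
  proof (rule sum.mono_neutral_left)
    show "\<forall>a\<in>UNIV - {a. admissible P (a # butlast C')}. \<pi> a * P a (hd C') * path_weight P C' = 0"
    proof
      fix a assume a: "a \<in> UNIV - {a. admissible P (a # butlast C')}"
      hence "butlast C' \<noteq> []" by (auto simp: admissible_def)
      hence "hd (butlast C') = hd C'" by (cases C') auto
      hence "\<not> P a (hd C') > 0"
        using a adm admissible_append_iff[of P "[a]" "butlast C'"] by (simp add: admissible_def)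
      hence "P a (hd C') = 0" using nonneg[rule_format, of a "hd C'"] by linarith
      thus "\<pi> a * P a (hd C') * path_weight P C' = 0" by simp
    qed
  qed simp_all
  also have "\<dots> = (\<Sum>a\<in>UNIV. \<pi> a * P a (hd C')) * path_weight P C'"
    by (simp add: sum_distrib_right)
  also have "\<dots> = mu_cyl P \<pi> C'"
    using stationary by (simp add: mu_cyl_eq_path_weight)
  finally show ?thesis .
qed

lemma blocks_eq_Sigma: "blocks P n k = Sigma (cyls P n) (\<lambda>C. {1..k C})"
  by (auto simp: blocks_def)

lemma sum_blocks:
  "(\<Sum>b\<in>blocks (P :: 'a::finite \<Rightarrow> 'a \<Rightarrow> real) n k. f b) = (\<Sum>C\<in>cyls P n. \<Sum>j=1..k C. f (C, j))"
  unfolding blocks_eq_Sigma by (subst sum.Sigma) (auto simp: finite_cyls)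

lemma sum_mu_cyl_blocks:
  "(\<Sum>b\<in>blocks (P :: 'a::finite \<Rightarrow> 'a \<Rightarrow> real) n k. mu_cyl P \<pi> (fst b)) = mu_phi P \<pi> n k"
  by (simp add: sum_blocks mu_phi_def)

lemma sum_Mbar_entry_row:
  fixes P :: "'a::finite \<Rightarrow> 'a \<Rightarrow> real"
  assumes rs: "row_stochastic P" and n: "n \<ge> 1" and kpos: "\<forall>C\<in>cyls P n. k C \<ge> 1"
    and b: "(C, j) \<in> blocks P n k"
  shows "(\<Sum>b'\<in>blocks P n k. Mbar_entry P k (C, j) b') = 1"
proof (cases "j < k C")
  case True
  have "(\<Sum>b'\<in>blocks P n k. Mbar_entry P k (C, j) b')
      = (\<Sum>b'\<in>blocks P n k. if b' = (C, Suc j) then 1 else 0)"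
    using True by (intro sum.cong) (auto simp: Mbar_entry_def split: if_splits)
  also have "\<dots> = 1" using True b by (simp add: blocks_eq_Sigma finite_cyls)
  finally show ?thesis .
next
  case False
  have C: "C \<in> cyls P n" using b by (simp add: blocks_def)
  have "(\<Sum>b'\<in>blocks P n k. Mbar_entry P k (C, j) b')
      = (\<Sum>C'\<in>cyls P n. \<Sum>j'=1..k C'.
           if j' = 1 then (if butlast C' = tl C then P (last C) (last C') else 0) else 0)"
    unfolding sum_blocks using False by (intro sum.cong refl) (auto simp: Mbar_entry_def)
  also have "\<dots> = (\<Sum>C'\<in>cyls P n. if butlast C' = tl C then P (last C) (last C') else 0)"
    using kpos by (intro sum.cong refl) simp
  also have "\<dots> = (\<Sum>C'\<in>{C' \<in> cyls P n. butlast C' = tl C}. P (last C) (last C'))"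
    by (simp add: sum.inter_filter finite_cyls)
  also have "\<dots> = 1"
    using rs sum_cyls_extend_right[OF _ C n] by (simp add: row_stochastic_def)
  finally show ?thesis .
qed

lemma sum_mu_cyl_Mbar_entry_col:
  fixes P :: "'a::finite \<Rightarrow> 'a \<Rightarrow> real"
  assumes rs: "row_stochastic P" and st: "stationary_pos P \<pi>" and n: "n \<ge> 1"
    and kpos: "\<forall>C\<in>cyls P n. k C \<ge> 1" and b': "(C', j') \<in> blocks P n k"
  shows "(\<Sum>b\<in>blocks P n k. mu_cyl P \<pi> (fst b) * Mbar_entry P k b (C', j')) = mu_cyl P \<pi> C'"
proof (cases "j' = 1")
  case False
  have "(\<Sum>b\<in>blocks P n k. mu_cyl P \<pi> (fst b) * Mbar_entry P k b (C', j'))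
      = (\<Sum>b\<in>blocks P n k. if b = (C', j' - 1) then mu_cyl P \<pi> C' else 0)"
    using False b' by (intro sum.cong refl) (auto simp: blocks_def Mbar_entry_def split: if_splits)
  also have "\<dots> = mu_cyl P \<pi> C'" using False b' by (auto simp: blocks_eq_Sigma finite_cyls)
  finally show ?thesis .
next
  case True
  have C': "C' \<in> cyls P n" using b' by (simp add: blocks_def)
  have "(\<Sum>b\<in>blocks P n k. mu_cyl P \<pi> (fst b) * Mbar_entry P k b (C', j'))
      = (\<Sum>C\<in>cyls P n. \<Sum>j=1..k C.
           if j = k C then (if tl C = butlast C' then mu_cyl P \<pi> C * P (last C) (last C') else 0) else 0)"
    unfolding sum_blocks using True by (intro sum.cong refl) (auto simp: Mbar_entry_def)
  also have "\<dots> = (\<Sum>C\<in>cyls P n. if tl C = butlast C' then mu_cyl P \<pi> C * P (last C) (last C') else 0)"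
    using kpos by (intro sum.cong refl) simp
  also have "\<dots> = (\<Sum>C\<in>{C \<in> cyls P n. tl C = butlast C'}. mu_cyl P \<pi> C * P (last C) (last C'))"
    by (simp add: sum.inter_filter finite_cyls)
  also have "\<dots> = mu_cyl P \<pi> C'"
    using rs st sum_cyls_extend_left[OF _ _ C' n] by (simp add: row_stochastic_def stationary_pos_def)
  finally show ?thesis .
qed

lemma Mbar_carrier: "Mbar P k bl \<in> carrier_mat (length bl) (length bl)"
  by (simp add: Mbar_def)

lemma Mbar_row_sum:
  fixes P :: "'a::finite \<Rightarrow> 'a \<Rightarrow> real"
  assumes rs: "row_stochastic P" and n: "n \<ge> 1" and kpos: "\<forall>C\<in>cyls P n. k C \<ge> 1"
    and bl: "distinct bl" "set bl = blocks P n k" and i: "i < length bl"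
  shows "(\<Sum>j<length bl. Mbar P k bl $$ (i, j)) = 1"
proof -
  have "(\<Sum>j<length bl. Mbar P k bl $$ (i, j)) = (\<Sum>j<length bl. Mbar_entry P k (bl ! i) (bl ! j))"
    using i by (simp add: Mbar_def)
  also have "\<dots> = (\<Sum>b'\<in>blocks P n k. Mbar_entry P k (bl ! i) b')"
    by (rule sum.reindex_bij_betw[OF bij_betw_nth[OF bl(1) refl bl(2)[symmetric]]])
  also have "\<dots> = 1"
    using sum_Mbar_entry_row[OF rs n kpos, of "fst (bl ! i)" "snd (bl ! i)"] nth_mem[OF i] bl(2)
    by simp
  finally show ?thesis .
qed

lemma Mbar_left_fixed:
  fixes P :: "'a::finite \<Rightarrow> 'a \<Rightarrow> real"
  assumes rs: "row_stochastic P" and st: "stationary_pos P \<pi>" and n: "n \<ge> 1"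
    and kpos: "\<forall>C\<in>cyls P n. k C \<ge> 1"
    and bl: "distinct bl" "set bl = blocks P n k" and j: "j < length bl"
  shows "(\<Sum>i<length bl. mu_cyl P \<pi> (fst (bl ! i)) * Mbar P k bl $$ (i, j)) = mu_cyl P \<pi> (fst (bl ! j))"
proof -
  have "(\<Sum>i<length bl. mu_cyl P \<pi> (fst (bl ! i)) * Mbar P k bl $$ (i, j))
      = (\<Sum>i<length bl. mu_cyl P \<pi> (fst (bl ! i)) * Mbar_entry P k (bl ! i) (bl ! j))"
    using j by (simp add: Mbar_def)
  also have "\<dots> = (\<Sum>b\<in>blocks P n k. mu_cyl P \<pi> (fst b) * Mbar_entry P k b (bl ! j))"
    by (rule sum.reindex_bij_betw[OF bij_betw_nth[OF bl(1) refl bl(2)[symmetric]]])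
  also have "\<dots> = mu_cyl P \<pi> (fst (bl ! j))"
    using sum_mu_cyl_Mbar_entry_col[OF rs st n kpos, of "fst (bl ! j)" "snd (bl ! j)"] nth_mem[OF j] bl(2)
    by simp
  finally show ?thesis .
qed

lemma blk_index_nth:
  assumes "b \<in> set bl"
  shows "blk_index bl b < length bl \<and> bl ! blk_index bl b = b"
  unfolding blk_index_def by (rule LeastI_ex) (use assms in \<open>metis in_set_conv_nth\<close>)

lemma mu_cyl_nonneg: "row_stochastic P \<Longrightarrow> stationary_pos P \<pi> \<Longrightarrow> mu_cyl P \<pi> w \<ge> 0"
  by (simp add: mu_cyl_eq_path_weight stationary_pos_def row_stochastic_def path_weight_nonneg
      less_imp_le)

lemma mu_cyl_pos: "stationary_pos P \<pi> \<Longrightarrow> admissible P w \<Longrightarrow> mu_cyl P \<pi> w > 0"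
  by (simp add: mu_cyl_eq_path_weight stationary_pos_def path_weight_pos)

lemma mu_phi_pos:
  fixes P :: "'a::finite \<Rightarrow> 'a \<Rightarrow> real"
  assumes "row_stochastic P" "stationary_pos P \<pi>" "\<forall>C\<in>cyls P n. k C \<ge> 1" "C \<in> cyls P n"
  shows "mu_phi P \<pi> n k > 0"
proof -
  have "mu_cyl P \<pi> C > 0" using assms(2,4) by (simp add: cyls_def mu_cyl_pos)
  thus ?thesis
    unfolding mu_phi_def using assms by (intro sum_pos2[of _ C]) (auto simp: finite_cyls mu_cyl_nonneg)
qed

theorem lemma7p3:
  fixes P :: "'a::finite \<Rightarrow> 'a \<Rightarrow> real"
    and \<pi> :: "'a \<Rightarrow> real"
    and n :: nat
    and k :: "'a list \<Rightarrow> nat"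
    and bl :: "('a list \<times> nat) list"
    and w :: "'a list"
  assumes "row_stochastic P"
    and "irreducible_mc P"
    and "stationary_pos P \<pi>"
    and "n \<ge> 1"
    and "\<forall>C\<in>cyls P n. k C \<ge> 1"
    and "distinct bl" and "set bl = blocks P n k"
    and "admissible P w" and "length w \<ge> n"
  shows "poly (cofactor_poly (Mbar P k bl)
                 (blk_index bl (take n w, 1)) (blk_index bl (drop (length w - n) w, 1))) 1
         = 1 / mu_phi P \<pi> n k * mu_cyl P \<pi> (take n w) * poly (Gpoly (Mbar P k bl)) 1"
proof -
  note rs = assms(1) and st = assms(3) and n = assms(4) and kpos = assms(5) and bl = assms(6,7)
  define t where "t = blk_index bl (take n w, 1)"
  define r where "r = blk_index bl (drop (length w - n) w, 1)"
  have first: "take n w \<in> cyls P n" and last: "drop (length w - n) w \<in> cyls P n"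
    using assms(8,9) by (simp_all add: cyls_def admissible_take admissible_drop)
  have "(take n w, 1) \<in> set bl" using first kpos bl(2) by (simp add: blocks_def)
  from blk_index_nth[OF this] have t: "t < length bl" "bl ! t = (take n w, 1)"
    unfolding t_def by blast+
  have "(drop (length w - n) w, 1) \<in> set bl" using last kpos bl(2) by (simp add: blocks_def)
  from blk_index_nth[OF this] have r: "r < length bl" unfolding r_def by blast
  have "(\<Sum>i<length bl. mu_cyl P \<pi> (fst (bl ! i))) = (\<Sum>b\<in>blocks P n k. mu_cyl P \<pi> (fst b))"
    by (rule sum.reindex_bij_betw[OF bij_betw_nth[OF bl(1) refl bl(2)[symmetric]]])
  also have "\<dots> = mu_phi P \<pi> n k" by (rule sum_mu_cyl_blocks)
  finally have "mu_cyl P \<pi> (take n w) * poly (Gpoly (Mbar P k bl)) 1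
      = mu_phi P \<pi> n k * poly (cofactor_poly (Mbar P k bl) t r) 1"
    using stochastic_cofactor_poly_at_1[OF Mbar_carrier t(1) r
        Mbar_row_sum[OF rs n kpos bl] Mbar_left_fixed[OF rs st n kpos bl]] t(2)
    by simp
  moreover have "mu_phi P \<pi> n k > 0" using mu_phi_pos[OF rs st kpos first] .
  ultimately show ?thesis unfolding t_def[symmetric] r_def[symmetric]
    by (simp add: field_simps)
qed

end
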